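(* Let $\mathcal A$ be a linear time-invariant algorithm written as a sequence of $m$ update equations executed in the order $(1,\dots,m)$ in each iteration, each update equation containing at most one oracle call. For any cyclic permutation $\tilde\pi=(l+1,\dots,m,1,\dots,l)$ of $(1,\dots,m)$, the algorithm $P_{\tilde\pi}\mathcal A$ and $\mathcal A$ are shift-equivalent.
   Context: A linear time-invariant algorithm has state $x^k$, oracle arguments $y^k$ and oracle outputs $u^k$ related by $x^{k+1}=Ax^k+Bu^k$, $y^k=Cx^k+Du^k$, $u^k=\phi(y^k)$ for real matrices $(A,B,C,D)$ and an oracle map $\phi$; in practice it is written as a list of update equations (each linear in the states and oracle outputs) executed sequentially within each iteration. For a permutation $\tilde\pi$ of $(1,\dots,m)$, $P_{\tilde\pi}\mathcal A$ denotes the algorithm that performs the update equations of $\mathcal A$ in the order $\tilde\pi$ at each iteration. The oracle sequence of an algorithm is the sequence of oracle calls (oracle together with its argument) made when it is run. Two algorithms are shift-equivalent (on a set of problems) if for any problem in the set and any initialization of one algorithm there exists an initialization of the other such that their oracle sequences match up to a prefix (i.e. agree after deleting finitely many initial oracle calls from one of them). *)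

theory Defs
  imports Complex_Main "HOL-Library.Sublist"
begin

text \<open>An update equation acts on the full algorithm state (type 'x, a real vector space
holding all state variables). It is either oracle-free, x := M x, or contains exactly
one oracle call: with argument y = C x, output u = phi o y, and update x := M x + N u.
Oracle arguments/outputs live in a real vector space 'v; oracles are indexed by 'o.\<close>

datatype ('x, 'v, 'o) update_eqn =
  UpdEq "'x \<Rightarrow> 'x" "('o \<times> ('x \<Rightarrow> 'v) \<times> ('v \<Rightarrow> 'x)) option"

type_synonym ('x, 'v, 'o) algorithm = "('x, 'v, 'o) update_eqn list"

definition lti_alg :: "('x::real_vector, 'v::real_vector, 'o) algorithm \<Rightarrow> bool" where
  "lti_alg A \<longleftrightarrow> (\<forall>e \<in> set A. case e of UpdEq M oc \<Rightarrow>
     linear M \<and> (case oc of None \<Rightarrow> True | Some (k, C, N) \<Rightarrow> linear C \<and> linear N))"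

fun step_eqn :: "('o \<Rightarrow> 'v \<Rightarrow> 'v) \<Rightarrow> ('x::real_vector, 'v, 'o) update_eqn \<Rightarrow> 'x
                  \<Rightarrow> 'x \<times> ('o \<times> 'v) list" where
  "step_eqn phi (UpdEq M None) x = (M x, [])"
| "step_eqn phi (UpdEq M (Some (k, C, N))) x = (M x + N (phi k (C x)), [(k, C x)])"

fun run_iter :: "('o \<Rightarrow> 'v \<Rightarrow> 'v) \<Rightarrow> ('x::real_vector, 'v, 'o) algorithm \<Rightarrow> 'x
                  \<Rightarrow> 'x \<times> ('o \<times> 'v) list" where
  "run_iter phi [] x = (x, [])"
| "run_iter phi (e # es) x =
     (let (x1, c1) = step_eqn phi e x; (x2, c2) = run_iter phi es x1 in (x2, c1 @ c2))"

text \<open>Oracle calls made during the first n iterations from initial state x.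
The oracle sequence of the run is the limit (union) of this prefix-increasing chain.\<close>
fun oracle_trace :: "('o \<Rightarrow> 'v \<Rightarrow> 'v) \<Rightarrow> ('x::real_vector, 'v, 'o) algorithm \<Rightarrow> 'x
                      \<Rightarrow> nat \<Rightarrow> ('o \<times> 'v) list" where
  "oracle_trace phi A x 0 = []"
| "oracle_trace phi A x (Suc n) =
     snd (run_iter phi A x) @ oracle_trace phi A (fst (run_iter phi A x)) n"

text \<open>The (possibly infinite) sequence given by chain S equals p followed by the
sequence given by chain T (equality of the limits of the prefix chains).\<close>
definition seq_eq_prefix :: "'a list \<Rightarrow> (nat \<Rightarrow> 'a list) \<Rightarrow> (nat \<Rightarrow> 'a list) \<Rightarrow> bool" where
  "seq_eq_prefix p S T \<longleftrightarrow>
     (\<forall>n. \<exists>n'. prefix (p @ T n) (S n')) \<and> (\<forall>n. \<exists>n'. prefix (S n) (p @ T n'))"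

text \<open>Two oracle sequences match up to a prefix: they agree after deleting finitely
many initial oracle calls from one of them.\<close>
definition match_up_to_prefix :: "(nat \<Rightarrow> 'a list) \<Rightarrow> (nat \<Rightarrow> 'a list) \<Rightarrow> bool" where
  "match_up_to_prefix S T \<longleftrightarrow> (\<exists>p. seq_eq_prefix p S T \<or> seq_eq_prefix p T S)"

definition shift_equivalent ::
  "('x::real_vector, 'v, 'o) algorithm \<Rightarrow> ('x, 'v, 'o) algorithm \<Rightarrow> bool" where
  "shift_equivalent A B \<longleftrightarrow> (\<forall>phi.
     (\<forall>x0. \<exists>z0. match_up_to_prefix (oracle_trace phi A x0) (oracle_trace phi B z0)) \<and>
     (\<forall>z0. \<exists>x0. match_up_to_prefix (oracle_trace phi B z0) (oracle_trace phi A x0)))"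

text \<open>P_pi A: perform the update equations of A in the order \<pi> (0-indexed).\<close>
definition permute_alg :: "(nat \<Rightarrow> nat) \<Rightarrow> 'e list \<Rightarrow> 'e list" where
  "permute_alg \<pi> A = map (\<lambda>i. A ! \<pi> i) [0..<length A]"

end

theory Submission
  imports Defs
begin

text \<open>Rotating the equations of an algorithm \<open>A = Q @ P\<close> gives \<open>P @ Q\<close>. Running \<open>P @ Q\<close>
from \<open>x\<close> first executes \<open>P\<close>, reaching a state \<open>y\<close>, and from then on performs exactly the
computation of \<open>Q @ P\<close> started at \<open>y\<close>; so its oracle sequence is that of \<open>Q @ P\<close> from \<open>y\<close>,
preceded by the finitely many oracle calls of the first pass through \<open>P\<close>. Conversely \<open>Q @ P\<close>
from \<open>z\<close> is \<open>P @ Q\<close> from the state reached after \<open>Q\<close>, shifted by the calls of \<open>Q\<close>.\<close>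

lemma run_iter_append:
  "run_iter phi (P @ Q) x =
     (let (y, cs) = run_iter phi P x; (z, ds) = run_iter phi Q y in (z, cs @ ds))"
  by (induction P arbitrary: x) (auto split: prod.splits)

lemma fst_run_iter_append [simp]:
  "fst (run_iter phi (P @ Q) x) = fst (run_iter phi Q (fst (run_iter phi P x)))"
  by (simp add: run_iter_append split: prod.splits)

lemma snd_run_iter_append [simp]:
  "snd (run_iter phi (P @ Q) x) = snd (run_iter phi P x) @ snd (run_iter phi Q (fst (run_iter phi P x)))"
  by (simp add: run_iter_append split: prod.splits)

lemma oracle_trace_Suc_right:
  "oracle_trace phi A x (Suc n) =
     oracle_trace phi A x n @ snd (run_iter phi A (((fst \<circ> run_iter phi A) ^^ n) x))"
  by (induction n arbitrary: x) (simp_all add: funpow_Suc_right del: funpow.simps)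

lemma oracle_trace_append_swap:
  "oracle_trace phi (P @ Q) x n @ snd (run_iter phi P (((fst \<circ> run_iter phi (P @ Q)) ^^ n) x)) =
     snd (run_iter phi P x) @ oracle_trace phi (Q @ P) (fst (run_iter phi P x)) n"
  by (induction n arbitrary: x) (simp_all add: funpow_Suc_right del: funpow.simps)

lemma seq_eq_prefix_oracle_trace_append_swap:
  "seq_eq_prefix (snd (run_iter phi P x)) (oracle_trace phi (P @ Q) x)
     (oracle_trace phi (Q @ P) (fst (run_iter phi P x)))"
  unfolding seq_eq_prefix_def
proof (intro conjI allI)
  fix n
  show "\<exists>n'. prefix (snd (run_iter phi P x) @ oracle_trace phi (Q @ P) (fst (run_iter phi P x)) n)
               (oracle_trace phi (P @ Q) x n')"
  proof
    have "prefix (oracle_trace phi (P @ Q) x n @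
                   snd (run_iter phi P (((fst \<circ> run_iter phi (P @ Q)) ^^ n) x)))
                 (oracle_trace phi (P @ Q) x (Suc n))"
      unfolding oracle_trace_Suc_right[of phi "P @ Q" x n] snd_run_iter_append by simp
    then show "prefix (snd (run_iter phi P x) @ oracle_trace phi (Q @ P) (fst (run_iter phi P x)) n)
                 (oracle_trace phi (P @ Q) x (Suc n))"
      by (simp only: oracle_trace_append_swap)
  qed
  show "\<exists>n'. prefix (oracle_trace phi (P @ Q) x n)
               (snd (run_iter phi P x) @ oracle_trace phi (Q @ P) (fst (run_iter phi P x)) n')"
    by (rule exI[of _ n]) (simp flip: oracle_trace_append_swap)
qed

lemma shift_equivalent_append_swap: "shift_equivalent (P @ Q) (Q @ P)"
  unfolding shift_equivalent_def match_up_to_prefix_def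
  using seq_eq_prefix_oracle_trace_append_swap by blast

lemma permute_alg_rotate: "permute_alg (\<lambda>i. (i + l) mod length A) A = rotate l A"
  by (rule nth_equalityI) (auto simp: permute_alg_def nth_rotate add.commute)

theorem proposition6p1:
  fixes A :: "('x::real_vector, 'v::real_vector, 'o) algorithm"
    and l :: nat
  assumes "lti_alg A"
    and "l < length A"
  shows "shift_equivalent (permute_alg (\<lambda>i. (i + l) mod length A) A) A"
proof -
  let ?k = "l mod length A"
  have "permute_alg (\<lambda>i. (i + l) mod length A) A = drop ?k A @ take ?k A"
    by (simp add: permute_alg_rotate rotate_drop_take)
  moreover have "A = take ?k A @ drop ?k A" by simp
  ultimately show ?thesis
    using shift_equivalent_append_swap by metis
qed

end
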